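(* Let $B$ be an $n \times n$ matrix with integer coefficients, let $e_n = (0,\dots,0,1)^T \in \mathbb{R}^n$, and let $q(t) = \det\left(B - tI + t\, e_n e_n^*\right) = \sum_i q_i t^i$. Then \[ \max_i |q_i| \le 2\left(2\sqrt{n}\,\max_{i,j}|B_{ij}|\right)^n. \] *)

theory Defs
  imports "Jordan_Normal_Form.Determinant" "HOL-Computational_Algebra.Polynomial"
begin

definition qpoly :: "nat \<Rightarrow> int mat \<Rightarrow> int poly" where
  "qpoly n B = det (map_mat (\<lambda>x. [:x:]) B - [:0, 1:] \<cdot>\<^sub>m (1\<^sub>m n)
      + [:0, 1:] \<cdot>\<^sub>m (mat_of_cols n [unit_vec n (n - 1)] * mat_of_rows n [unit_vec n (n - 1)]))"

end

theory Submission
  imports Defs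
begin

text \<open>Write D = e_n e_n^T - I, so that q(t) = det (B + t D). Expanding the determinant
  multilinearly in the rows, the coefficient of t^k is the sum, over the k-element sets S of
  row indices, of the determinant of the matrix whose rows in S are those of D and whose other
  rows are those of B. Every row of such a matrix has Euclidean norm at most sqrt n * max |B_ij|
  (the rows of D have norm at most 1 and the last one is zero), so Hadamard's inequality bounds
  each of these determinants by (sqrt n * max |B_ij|)^n, and there are at most 2^n sets S.
  Hadamard's inequality itself is proved by Gram-Schmidt orthogonalisation of the rows, carried
  out by determinant-preserving row operations that never increase a row norm.\<close>

definition pencil :: "'a::comm_ring_1 mat \<Rightarrow> 'a mat \<Rightarrow> 'a poly mat" where
  "pencil A D = mat (dim_row A) (dim_col A) (\<lambda>ij. [:A $$ ij, D $$ ij:])"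

definition mix_rows :: "nat set \<Rightarrow> 'a mat \<Rightarrow> 'a mat \<Rightarrow> 'a mat" where
  "mix_rows S D A = mat (dim_row A) (dim_col A) (\<lambda>(i, j). if i \<in> S then D $$ (i, j) else A $$ (i, j))"

definition last_unit_minus_id :: "nat \<Rightarrow> int mat" where
  "last_unit_minus_id n = mat n n (\<lambda>(i, j). if i = j \<and> i \<noteq> n - 1 then -1 else 0)"

lemma pencil_carrier [simp]: "A \<in> carrier_mat n m \<Longrightarrow> pencil A D \<in> carrier_mat n m"
  by (simp add: pencil_def)

lemma mix_rows_carrier [simp]: "A \<in> carrier_mat n m \<Longrightarrow> mix_rows S D A \<in> carrier_mat n m"
  by (simp add: mix_rows_def)

lemma qpoly_eq_det_pencil:
  assumes "B \<in> carrier_mat n n"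
  shows "qpoly n B = det (pencil B (last_unit_minus_id n))"
  unfolding qpoly_def
  by (rule arg_cong[of _ _ det], rule eq_matI)
    (use assms in \<open>auto simp: pencil_def last_unit_minus_id_def mat_of_cols_def mat_of_rows_def
       scalar_prod_def unit_vec_def one_pCons\<close>)

lemma prod_monom:
  "finite S \<Longrightarrow> (\<Prod>i\<in>S. monom (c i) (m i)) = monom (\<Prod>i\<in>S. c i) (\<Sum>i\<in>S. m i)"
  by (induction S rule: finite_induct) (simp_all add: mult_monom)

lemma prod_linear_polys:
  fixes a d :: "'i \<Rightarrow> 'a::comm_ring_1"
  assumes "finite I"
  shows "(\<Prod>i\<in>I. [:a i, d i:]) = (\<Sum>S\<in>Pow I. monom ((\<Prod>i\<in>S. d i) * (\<Prod>i\<in>I - S. a i)) (card S))"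
proof -
  have "[:a i, d i:] = monom (d i) 1 + monom (a i) 0" for i
    by (simp add: monom_Suc monom_0)
  then have "(\<Prod>i\<in>I. [:a i, d i:])
      = (\<Sum>S\<in>Pow I. (\<Prod>i\<in>S. monom (d i) 1) * (\<Prod>i\<in>I - S. monom (a i) 0))"
    using prod_add[OF assms] by simp
  also have "\<dots> = (\<Sum>S\<in>Pow I. monom ((\<Prod>i\<in>S. d i) * (\<Prod>i\<in>I - S. a i)) (card S))"
    using assms by (intro sum.cong refl) (simp add: prod_monom mult_monom finite_subset)
  finally show ?thesis .
qed

lemma coeff_det_pencil:
  fixes A D :: "'a::comm_ring_1 mat"
  assumes A: "A \<in> carrier_mat n n"
  shows "coeff (det (pencil A D)) k = (\<Sum>S | S \<subseteq> {0..<n} \<and> card S = k. det (mix_rows S D A))"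
proof -
  let ?I = "{0..<n}" and ?P = "{p. p permutes {0..<n}}"
  have coeff_prod: "coeff (\<Prod>i\<in>?I. pencil A D $$ (i, p i)) k
      = (\<Sum>S | S \<subseteq> ?I \<and> card S = k. \<Prod>i\<in>?I. mix_rows S D A $$ (i, p i))"
    if "p permutes ?I" for p
  proof -
    have p_lt: "i < n \<Longrightarrow> p i < n" for i
      using permutes_in_image[OF that] by simp
    have mix: "(\<Prod>i\<in>?I. mix_rows S D A $$ (i, p i))
        = (\<Prod>i\<in>S. D $$ (i, p i)) * (\<Prod>i\<in>?I - S. A $$ (i, p i))" if "S \<subseteq> ?I" for S
    proof -
      have "(\<Prod>i\<in>?I. mix_rows S D A $$ (i, p i))
          = (\<Prod>i\<in>?I. if i \<in> S then D $$ (i, p i) else A $$ (i, p i))"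
        using A p_lt by (intro prod.cong) (auto simp: mix_rows_def)
      also have "\<dots> = (\<Prod>i\<in>?I \<inter> S. D $$ (i, p i)) * (\<Prod>i\<in>?I \<inter> - S. A $$ (i, p i))"
        by (simp add: prod.If_cases)
      finally show ?thesis
        using that by (simp add: Int_absorb1 Diff_eq)
    qed
    have "(\<Prod>i\<in>?I. pencil A D $$ (i, p i)) = (\<Prod>i\<in>?I. [:A $$ (i, p i), D $$ (i, p i):])"
      using A p_lt by (intro prod.cong) (auto simp: pencil_def)
    then show ?thesis
      by (simp add: prod_linear_polys coeff_sum coeff_monom mix sum.If_cases Pow_def
          Collect_conj_eq[symmetric] conj_commute eq_commute[of k])
  qed
  have "coeff (det (pencil A D)) k = (\<Sum>p\<in>?P. signof p * coeff (\<Prod>i\<in>?I. pencil A D $$ (i, p i)) k)"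
  proof -
    have "coeff (signof p * q) k = signof p * coeff q k" for p and q :: "'a poly"
      by (simp add: sign_def)
    then show ?thesis
      using A by (simp add: det_def'[of _ n] coeff_sum)
  qed
  also have "\<dots> = (\<Sum>p\<in>?P. \<Sum>S | S \<subseteq> ?I \<and> card S = k. signof p * (\<Prod>i\<in>?I. mix_rows S D A $$ (i, p i)))"
    by (intro sum.cong refl) (simp add: coeff_prod sum_distrib_left)
  also have "\<dots> = (\<Sum>S | S \<subseteq> ?I \<and> card S = k. det (mix_rows S D A))"
    using A by (subst sum.swap) (simp add: det_def'[of _ n])
  finally show ?thesis .
qed

lemma row_dot_row:
  assumes "A \<in> carrier_mat n m" "i < n" "j < n"
  shows "row A i \<bullet> row A j = (\<Sum>l<m. A $$ (i, l) * A $$ (j, l))"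
  using assms by (auto simp: scalar_prod_def lessThan_atLeast0 intro!: sum.cong)

lemma scalar_prod_self_nonneg: "0 \<le> (v :: real vec) \<bullet> v"
  by (simp add: scalar_prod_def sum_nonneg)

lemma det_add_row_combination:
  fixes A :: "'a::comm_ring_1 mat"
  assumes A: "A \<in> carrier_mat n n" and k: "k < n" and J: "J \<subseteq> {0..<n} - {k}"
  shows "det (mat n n (\<lambda>(i, l). if i = k then A $$ (k, l) + (\<Sum>j\<in>J. c j * A $$ (j, l)) else A $$ (i, l)))
    = det A"
proof -
  have "finite J" using J finite_subset by blast
  from this J show ?thesis
  proof (induction J rule: finite_subset_induct)
    case empty
    have "mat n n (\<lambda>(i, l). if i = k then A $$ (k, l) + (\<Sum>j\<in>{}. c j * A $$ (j, l)) else A $$ (i, l)) = A"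
      using A by (auto intro!: eq_matI)
    then show ?case by simp
  next
    case (insert x F)
    let ?M = "\<lambda>F. mat n n (\<lambda>(i, l). if i = k then A $$ (k, l) + (\<Sum>j\<in>F. c j * A $$ (j, l)) else A $$ (i, l))"
    have "?M (insert x F) = addrow (c x) k x (?M F)"
      using insert A k by (auto intro!: eq_matI simp: mat_addrow_def)
    moreover have "det (addrow (c x) k x (?M F)) = det (?M F)"
      by (rule det_addrow[of _ n]) (use insert in auto)
    ultimately show ?case using insert by simp
  qed
qed

lemma det_sq_orthogonal_rows:
  fixes A :: "real mat"
  assumes A: "A \<in> carrier_mat n n"
    and orth: "\<And>i j. i < n \<Longrightarrow> j < n \<Longrightarrow> i \<noteq> j \<Longrightarrow> row A i \<bullet> row A j = 0"
  shows "(det A)\<^sup>2 = (\<Prod>i = 0..<n. row A i \<bullet> row A i)"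
proof -
  define G where "G = A * transpose_mat A"
  have G: "G \<in> carrier_mat n n" using A by (simp add: G_def)
  have G_index: "G $$ (i, j) = row A i \<bullet> row A j" if "i < n" "j < n" for i j
    using A that by (simp add: G_def)
  have "upper_triangular G"
    using G G_index orth by (auto simp: upper_triangular_def)
  then have "det G = (\<Prod>i = 0..<n. row A i \<bullet> row A i)"
    using G G_index by (simp add: det_upper_triangular prod_list_diag_prod)
  moreover have "det G = (det A)\<^sup>2"
    using A by (simp add: G_def det_mult[OF A, of "transpose_mat A"] det_transpose power2_eq_square)
  ultimately show ?thesis by simp
qed

text \<open>No vector u j needs to be nonzero: a zero vector gets the coefficient 0 / 0 = 0.\<close>

lemma
  fixes w :: "nat \<Rightarrow> real" and u :: "'i \<Rightarrow> nat \<Rightarrow> real"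
  assumes J: "finite J"
    and orth: "\<And>i j. i \<in> J \<Longrightarrow> j \<in> J \<Longrightarrow> i \<noteq> j \<Longrightarrow> (\<Sum>l<n. u i l * u j l) = 0"
  defines "v \<equiv> \<lambda>l. w l - (\<Sum>j\<in>J. (\<Sum>m<n. w m * u j m) / (\<Sum>m<n. u j m * u j m) * u j l)"
  shows residual_orthogonal: "j \<in> J \<Longrightarrow> (\<Sum>l<n. v l * u j l) = 0"
    and residual_norm_le: "(\<Sum>l<n. v l * v l) \<le> (\<Sum>l<n. w l * w l)"
proof -
  define ip where "ip x y = (\<Sum>l<n. x l * y l)" for x y :: "nat \<Rightarrow> real"
  define c where "c j = ip w (u j) / ip (u j) (u j)" for j
  define p where "p l = (\<Sum>j\<in>J. c j * u j l)" for l
  have v: "v = (\<lambda>l. w l - p l)"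
    by (simp add: v_def p_def c_def ip_def)
  have ip_v_u: "ip v (u j) = ip w (u j) - (\<Sum>m\<in>J. c m * ip (u m) (u j))" for j
    by (simp add: v p_def ip_def algebra_simps sum_subtractf sum_distrib_left sum_distrib_right
        sum.swap[of _ J "{..<n}"])
  have v_orth: "ip v (u j) = 0" if j: "j \<in> J" for j
  proof (cases "ip (u j) (u j) = 0")
    case True
    then have "u j l = 0" if "l < n" for l
      using that sum_nonneg_eq_0_iff[of "{..<n}" "\<lambda>l. u j l * u j l"] by (simp add: ip_def)
    then show ?thesis by (simp add: ip_def)
  next
    case False
    have "(\<Sum>m\<in>J. c m * ip (u m) (u j)) = c j * ip (u j) (u j)"
      using J j orth by (subst sum.remove[OF J j]) (simp_all add: ip_def)
    then show ?thesis
      using False by (simp add: ip_v_u c_def)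
  qed
  have "ip v p = (\<Sum>j\<in>J. c j * ip v (u j))"
    by (simp add: ip_def p_def sum_distrib_left sum.swap[of _ J "{..<n}"] mult.left_commute)
  also have "\<dots> = 0"
    by (simp add: v_orth)
  finally have "ip v p = 0" .
  have "ip w w = (\<Sum>l<n. v l * v l + 2 * (v l * p l) + p l * p l)"
    unfolding ip_def by (rule sum.cong) (simp_all add: v algebra_simps)
  also have "\<dots> = ip v v + 2 * ip v p + ip p p"
    by (simp add: ip_def sum.distrib sum_distrib_left)
  finally have "ip w w = ip v v + 2 * ip v p + ip p p" .
  with \<open>ip v p = 0\<close> have "ip w w = ip v v + ip p p"
    by simp
  moreover have "0 \<le> ip p p"
    by (simp add: ip_def sum_nonneg)
  ultimately have "ip v v \<le> ip w w" by simp
  then show "(\<Sum>l<n. v l * v l) \<le> (\<Sum>l<n. w l * w l)"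
    by (simp add: ip_def)
  show "j \<in> J \<Longrightarrow> (\<Sum>l<n. v l * u j l) = 0"
    using v_orth by (simp add: ip_def)
qed

lemma orthogonalize_row:
  fixes A :: "real mat"
  assumes A: "A \<in> carrier_mat n n" and k: "k < n"
    and orth: "\<And>i j. k < i \<Longrightarrow> i < n \<Longrightarrow> k < j \<Longrightarrow> j < n \<Longrightarrow> i \<noteq> j \<Longrightarrow> row A i \<bullet> row A j = 0"
  obtains A' where "A' \<in> carrier_mat n n" "det A' = det A"
    "\<And>i j. k \<le> i \<Longrightarrow> i < n \<Longrightarrow> k \<le> j \<Longrightarrow> j < n \<Longrightarrow> i \<noteq> j \<Longrightarrow> row A' i \<bullet> row A' j = 0"
    "\<And>i. i < n \<Longrightarrow> row A' i \<bullet> row A' i \<le> row A i \<bullet> row A i"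
proof
  define J where "J = {k<..<n}"
  define u where "u j l = A $$ (j, l)" for j l
  define c where "c j = (\<Sum>m<n. u k m * u j m) / (\<Sum>m<n. u j m * u j m)" for j
  define v where "v l = u k l - (\<Sum>j\<in>J. c j * u j l)" for l
  define A' where "A' = mat n n (\<lambda>(i, l). if i = k then v l else A $$ (i, l))"
  show A': "A' \<in> carrier_mat n n"
    by (simp add: A'_def)
  have u_orth: "(\<Sum>l<n. u i l * u j l) = 0" if "i \<in> J" "j \<in> J" "i \<noteq> j" for i j
    using orth[of i j] that A by (simp add: J_def u_def row_dot_row)
  have v_orth: "(\<Sum>l<n. v l * u j l) = 0" if "j \<in> J" for j
    using residual_orthogonal[where J=J and u=u and w="u k", OF _ u_orth that] by (simp add: J_def v_def c_def)
  have v_norm: "(\<Sum>l<n. v l * v l) \<le> (\<Sum>l<n. u k l * u k l)"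
    using residual_norm_le[where J=J and u=u and w="u k", OF _ u_orth] by (simp add: J_def v_def c_def)
  have "A' = mat n n (\<lambda>(i, l). if i = k then A $$ (k, l) + (\<Sum>j\<in>J. (- c j) * A $$ (j, l)) else A $$ (i, l))"
    unfolding A'_def v_def u_def by (intro eq_matI) (simp_all add: sum_negf)
  also have "det \<dots> = det A"
    by (rule det_add_row_combination[OF A k]) (auto simp: J_def)
  finally show "det A' = det A" .
  have A'_dot: "row A' i \<bullet> row A' j
      = (\<Sum>l<n. (if i = k then v l else u i l) * (if j = k then v l else u j l))"
    if "i < n" "j < n" for i j
    using that by (subst row_dot_row[OF A' that]) (auto simp: A'_def u_def intro!: sum.cong)
  show "row A' i \<bullet> row A' j = 0"
    if ij: "k \<le> i" "i < n" "k \<le> j" "j < n" "i \<noteq> j" for i j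
  proof -
    consider "i = k" | "j = k" | "k < i" "k < j" using ij by (auto simp: le_less)
    then show ?thesis
    proof cases
      case 1
      then show ?thesis using ij v_orth[of j] by (simp add: A'_dot J_def)
    next
      case 2
      then show ?thesis using ij v_orth[of i] by (simp add: A'_dot J_def mult.commute)
    next
      case 3
      then show ?thesis using ij u_orth[of i j] by (simp add: A'_dot J_def)
    qed
  qed
  show "row A' i \<bullet> row A' i \<le> row A i \<bullet> row A i" if "i < n" for i
    using that v_norm by (cases "i = k") (simp_all add: A'_dot row_dot_row[OF A] u_def)
qed

theorem hadamard_inequality:
  fixes A :: "real mat"
  assumes "A \<in> carrier_mat n n"
  shows "(det A)\<^sup>2 \<le> (\<Prod>i = 0..<n. row A i \<bullet> row A i)"
proof -
  have partially_orthogonal: "(det A)\<^sup>2 \<le> (\<Prod>i = 0..<n. row A i \<bullet> row A i)"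
    if "A \<in> carrier_mat n n" "m \<le> n"
      and "\<And>i j. m \<le> i \<Longrightarrow> i < n \<Longrightarrow> m \<le> j \<Longrightarrow> j < n \<Longrightarrow> i \<noteq> j \<Longrightarrow> row A i \<bullet> row A j = 0"
    for m and A :: "real mat"
    using that
  proof (induction m arbitrary: A)
    case 0
    then show ?case by (simp add: det_sq_orthogonal_rows[of A n])
  next
    case (Suc m)
    have "m < n" using Suc.prems(2) by simp
    have orth: "row A i \<bullet> row A j = 0" if "m < i" "i < n" "m < j" "j < n" "i \<noteq> j" for i j
      using Suc.prems(3) that by (simp add: Suc_le_eq)
    show ?case
    proof (rule orthogonalize_row[OF Suc.prems(1) \<open>m < n\<close> orth])
      fix A' assume A': "A' \<in> carrier_mat n n" "det A' = det A"
        and orth': "\<And>i j. m \<le> i \<Longrightarrow> i < n \<Longrightarrow> m \<le> j \<Longrightarrow> j < n \<Longrightarrow> i \<noteq> j \<Longrightarrow> row A' i \<bullet> row A' j = 0"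
        and shorter: "\<And>i. i < n \<Longrightarrow> row A' i \<bullet> row A' i \<le> row A i \<bullet> row A i"
      have "(det A)\<^sup>2 = (det A')\<^sup>2" using A' by simp
      also have "\<dots> \<le> (\<Prod>i = 0..<n. row A' i \<bullet> row A' i)"
        using Suc.prems(2) orth' by (intro Suc.IH[OF A'(1)]) simp_all
      also have "\<dots> \<le> (\<Prod>i = 0..<n. row A i \<bullet> row A i)"
        by (intro prod_mono) (simp add: shorter scalar_prod_self_nonneg)
      finally show ?case .
    qed
  qed
  show ?thesis
    by (rule partially_orthogonal[OF assms order.refl]) simp
qed

corollary abs_det_le_pow_of_row_bound:
  fixes A :: "real mat"
  assumes A: "A \<in> carrier_mat n n" and "0 \<le> r"
    and rows: "\<And>i. i < n \<Longrightarrow> row A i \<bullet> row A i \<le> r\<^sup>2"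
  shows "\<bar>det A\<bar> \<le> r ^ n"
proof -
  have "(det A)\<^sup>2 \<le> (\<Prod>i = 0..<n. r\<^sup>2)"
    using hadamard_inequality[OF A]
    by (rule order_trans) (intro prod_mono, simp add: rows scalar_prod_self_nonneg)
  also have "\<dots> = (r ^ n)\<^sup>2"
    by (simp add: power_mult[symmetric] mult.commute)
  finally have "\<bar>det A\<bar>\<^sup>2 \<le> (r ^ n)\<^sup>2"
    by simp
  then show ?thesis
    by (rule power2_le_imp_le) (simp add: \<open>0 \<le> r\<close>)
qed

lemma abs_det_mix_rows_le:
  fixes B :: "int mat"
  assumes B: "B \<in> carrier_mat n n" and n: "n \<ge> 1"
    and M: "\<And>i j. i < n \<Longrightarrow> j < n \<Longrightarrow> \<bar>B $$ (i, j)\<bar> \<le> M"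
  shows "\<bar>real_of_int (det (mix_rows S (last_unit_minus_id n) B))\<bar> \<le> (sqrt (real n) * M) ^ n"
proof -
  define X where "X = map_mat real_of_int (mix_rows S (last_unit_minus_id n) B)"
  have X: "X \<in> carrier_mat n n"
    using B by (simp add: X_def)
  have det_X: "det X = real_of_int (det (mix_rows S (last_unit_minus_id n) B))"
    by (simp add: X_def)
  have "0 \<le> M"
    using M[of 0 0] n by simp
  have row_from_D: "row X i \<bullet> row X i = (if i = n - 1 then 0 else 1)" if i: "i \<in> S" "i < n" for i
  proof -
    have X_row: "X $$ (i, l) = (if l = i \<and> i \<noteq> n - 1 then -1 else 0)" if "l < n" for l
      using i that B by (simp add: X_def mix_rows_def last_unit_minus_id_def)
    have "row X i \<bullet> row X i = (\<Sum>l<n. if l = i then (if i = n - 1 then 0 else 1) else 0)"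
      unfolding row_dot_row[OF X i(2) i(2)] by (intro sum.cong) (auto simp: X_row)
    then show ?thesis
      using i by simp
  qed
  have row_from_B: "row X i \<bullet> row X i \<le> real n * (real_of_int M)\<^sup>2" if "i \<notin> S" "i < n" for i
  proof -
    have "row X i \<bullet> row X i = (\<Sum>l<n. (real_of_int (B $$ (i, l)))\<^sup>2)"
      unfolding row_dot_row[OF X that(2) that(2)] using that B
      by (auto simp: X_def mix_rows_def power2_eq_square intro!: sum.cong)
    also have "\<dots> \<le> (\<Sum>l<n. (real_of_int M)\<^sup>2)"
      using that M \<open>0 \<le> M\<close> by (intro sum_mono) (simp add: abs_le_square_iff[symmetric] flip: of_int_abs)
    finally show ?thesis by simp
  qed
  txt \<open>The rows taken from last_unit_minus_id n have norm at most 1, which exceeds sqrt n * M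
    only if M = 0; in that case the last row of X vanishes.\<close>
  show ?thesis
  proof (cases "M = 0")
    case True
    have "row X (n - 1) \<bullet> row X (n - 1) = 0"
      using row_from_D[of "n - 1"] row_from_B[of "n - 1"] scalar_prod_self_nonneg[of "row X (n - 1)"] n True
      by (cases "n - 1 \<in> S") auto
    then have zero_prod: "(\<Prod>i = 0..<n. row X i \<bullet> row X i) = 0"
      using n by (intro prod_zero bexI[of _ "n - 1"]) auto
    have "det X = 0"
      using hadamard_inequality[OF X] unfolding zero_prod by simp
    then show ?thesis
      using True n det_X by simp
  next
    case False
    with \<open>0 \<le> M\<close> have "1 \<le> M"
      by presburger
    then have "1 * 1 \<le> real n * (real_of_int M)\<^sup>2"
      using n by (intro mult_mono) (simp_all add: one_le_power)
    then have "row X i \<bullet> row X i \<le> (sqrt (real n) * M)\<^sup>2" if "i < n" for i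
      using that row_from_D[of i] row_from_B[of i] by (cases "i \<in> S") (auto simp: power_mult_distrib)
    then have "\<bar>det X\<bar> \<le> (sqrt (real n) * M) ^ n"
      using \<open>0 \<le> M\<close> by (intro abs_det_le_pow_of_row_bound[OF X]) auto
    then show ?thesis
      using det_X by simp
  qed
qed

theorem lemma3:
  fixes B :: "int mat" and n :: nat
  assumes "B \<in> carrier_mat n n" and "n \<ge> 1"
  shows "\<forall>i. \<bar>real_of_int (coeff (qpoly n B) i)\<bar>
           \<le> 2 * (2 * sqrt (real n) * real_of_int (Max {\<bar>B $$ (i, j)\<bar> | i j. i < n \<and> j < n})) ^ n"
proof
  fix k
  define M where "M = Max {\<bar>B $$ (i, j)\<bar> | i j. i < n \<and> j < n}"
  define \<S> where "\<S> = {S. S \<subseteq> {0..<n} \<and> card S = k}"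
  have "{\<bar>B $$ (i, j)\<bar> | i j. i < n \<and> j < n} = (\<lambda>(i, j). \<bar>B $$ (i, j)\<bar>) ` ({..<n} \<times> {..<n})"
    by auto
  then have M: "\<bar>B $$ (i, j)\<bar> \<le> M" if "i < n" "j < n" for i j
    unfolding M_def using that by (intro Max_ge) auto
  have "0 \<le> M"
    using M[of 0 0] assms(2) by simp
  have "coeff (qpoly n B) k = (\<Sum>S\<in>\<S>. det (mix_rows S (last_unit_minus_id n) B))"
    using assms(1) by (simp add: qpoly_eq_det_pencil coeff_det_pencil \<S>_def)
  then have "\<bar>real_of_int (coeff (qpoly n B) k)\<bar>
      \<le> (\<Sum>S\<in>\<S>. \<bar>real_of_int (det (mix_rows S (last_unit_minus_id n) B))\<bar>)"
    by (simp add: sum_abs)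
  also have "\<dots> \<le> real (card \<S>) * (sqrt (real n) * M) ^ n"
    using abs_det_mix_rows_le[OF assms M] by (intro sum_bounded_above) auto
  also have "\<dots> \<le> 2 ^ n * (sqrt (real n) * M) ^ n"
    using \<open>0 \<le> M\<close> binomial_le_pow2[of n k]
    by (intro mult_right_mono) (simp_all add: \<S>_def n_subsets)
  also have "\<dots> \<le> 2 * (2 * sqrt (real n) * M) ^ n"
    using \<open>0 \<le> M\<close> by (simp add: power_mult_distrib)
  finally show "\<bar>real_of_int (coeff (qpoly n B) k)\<bar> \<le> 2 * (2 * sqrt (real n) * real_of_int M) ^ n" .
qed

end
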